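(* Let $\mathcal{G}^0=(\mathcal V,\mathcal E^0)$ be a graph on $\mathcal V=\{1,\dots,N\}$ (not necessarily undirected) and let the packet-loss processes $\{\theta^{ij}_k\}$, $e^{ij}\in\mathcal E^0$, satisfy Assumption A. Then for every $k\ge 0$, $$\mathbb E\big[L_{\sigma_{k+1}}^\top L_{\sigma_{k+1}}\,\big|\,\sigma_k\big]=\mathbb E\big[L_{\sigma_{k+1}}\,\big|\,\sigma_k\big]^\top\,\mathbb E\big[L_{\sigma_{k+1}}\,\big|\,\sigma_k\big]+\mathcal V_k(\mathcal G)+\mathcal V_k(\mathcal G^\top),$$ where conditional expectations of random matrices are taken entrywise and $\mathcal V_k(\mathcal G),\mathcal V_k(\mathcal G^\top)$ are the conditional variance matrices defined in the context.
   Context: Graphs: $\mathcal G=(\mathcal V,\mathcal E)$ with $\mathcal V=\{1,\dots,N\}$, $\mathcal E\subseteq\mathcal V\times\mathcal V$, no self-loops; $e^{ij}:=(i,j)$ is read as an edge pointing from $j$ to $i$. In-neighbourhood $\mathcal N_i^-=\{j:e^{ij}\in\mathcal E\}$, out-neighbourhood $\mathcal N_i^+=\{j:e^{ji}\in\mathcal E\}$. The transposed graph $\mathcal G^\top$ has edge set $\{e^{ij}:e^{ji}\in\mathcal E\}$. The Laplacian $L(\mathcal G)=[l_{ij}]\in\mathbb Z^{N\times N}$ has $l_{ij}=-1$ if $i\neq j$ and $e^{ij}\in\mathcal E$, $l_{ij}=0$ if $i\ne j$ and $e^{ij}\notin\mathcal E$, and $l_{ii}=-\sum_{l\neq i}l_{il}$.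 Packet loss: for each $e^{ij}\in\mathcal E^0$ there is a $\{0,1\}$-valued process $\{\theta^{ij}_k\}_{k\ge0}$ ($1$ = successful transmission on $e^{ij}$ at time $k$). Let $\sigma_k:=(\theta^{ij}_k)_{e^{ij}\in\mathcal E^0}$ denote the joint state, $\mathcal G_{\sigma_k}:=(\mathcal V,\{e^{ij}\in\mathcal E^0:\theta^{ij}_k=1\})$, $L_{\sigma_k}:=L(\mathcal G_{\sigma_k})$, $L^0:=L(\mathcal G^0)$. Assumption A: there are numbers $p^{ij},q^{ij},\eta^{ij}\in[0,1]$ such that $\mathbb P(\theta^{ij}_0=1)=\eta^{ij}$; $\{\sigma_k\}$ is a Markov chain and, conditionally on $\sigma_k$, $\theta^{ij}_{k+1}=1$ with probability $p^{ij}$ if $\theta^{ij}_k=1$ and with probability $q^{ij}$ if $\theta^{ij}_k=0$; and the processes associated with distinct unordered pairs of vertices (i.e. $\theta^{ij}$ and $\theta^{rs}$ whenever $e^{rs}\notin\{e^{ij},e^{ji}\}$) are mutually independent. Conditional variance matrices: set $v^{ij}_k:=\operatorname{Var}[\theta^{ij}_{k+1}\mid\sigma_k]$ for $e^{ij}\in\mathcal E^0$ ($=\alpha(1-\alpha)$ with $\alpha=\mathbb E[\theta^{ij}_{k+1}\mid\sigma_k]$). $\mathcal V_k(\mathcal G)$ is the $N\times N$ matrix with off-diagonal entries $-v^{ij}_k$ if $e^{ij}\in\mathcal E^0$ and $0$ otherwise, and diagonal entries $\sum_{r\in\mathcal N_i^-}v^{ir}_k$ (the conditional variance of the $i$-th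 diagonal entry of $L(\mathcal G_{\sigma_{k+1}})$); $\mathcal V_k(\mathcal G^\top)$ is the analogous matrix for the transposed graph, i.e. off-diagonal $(i,j)$ entry $-v^{ji}_k$ if $e^{ji}\in\mathcal E^0$, else $0$, and diagonal entries $\sum_{s\in\mathcal N_i^+}v^{si}_k$ (neighbourhoods w.r.t. $\mathcal G^0$). (These are the weighted Laplacians of $\mathcal G^0$ and $(\mathcal G^0)^\top$ with edge weights $v^{ij}_k$.) *)

theory Defs
  imports "HOL-Probability.Probability"
begin

text \<open>Matrices are functions nat => nat => real, indexed over the vertex set {1..N}.\<close>

definition mtrans :: "(nat \<Rightarrow> nat \<Rightarrow> real) \<Rightarrow> nat \<Rightarrow> nat \<Rightarrow> real" where
  "mtrans A i j = A j i"

definition mmult :: "nat \<Rightarrow> (nat \<Rightarrow> nat \<Rightarrow> real) \<Rightarrow> (nat \<Rightarrow> nat \<Rightarrow> real) \<Rightarrow> nat \<Rightarrow> nat \<Rightarrow> real" where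
  "mmult N A B i j = (\<Sum>l\<in>{1..N}. A i l * B l j)"

text \<open>Laplacian of the graph ({1..N}, E); (i,j) in E is the edge from j to i.\<close>
definition laplacian :: "nat \<Rightarrow> (nat \<times> nat) set \<Rightarrow> nat \<Rightarrow> nat \<Rightarrow> real" where
  "laplacian N E i j =
     (if i = j then real (card {l \<in> {1..N}. l \<noteq> i \<and> (i, l) \<in> E})
      else if (i, j) \<in> E then -1 else 0)"

definition edge_state :: "(nat \<times> nat) set \<Rightarrow> (nat \<times> nat \<Rightarrow> nat \<Rightarrow> 'a \<Rightarrow> real) \<Rightarrow> nat \<Rightarrow> 'a \<Rightarrow> (nat \<times> nat \<Rightarrow> real)" where
  "edge_state E0 \<theta> k \<omega> = (\<lambda>e. if e \<in> E0 then \<theta> e k \<omega> else 0)"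

definition rand_edges :: "(nat \<times> nat) set \<Rightarrow> (nat \<times> nat \<Rightarrow> nat \<Rightarrow> 'a \<Rightarrow> real) \<Rightarrow> nat \<Rightarrow> 'a \<Rightarrow> (nat \<times> nat) set" where
  "rand_edges E0 \<theta> k \<omega> = {e \<in> E0. \<theta> e k \<omega> = 1}"

definition state_event :: "'a measure \<Rightarrow> (nat \<times> nat) set \<Rightarrow> (nat \<times> nat \<Rightarrow> nat \<Rightarrow> 'a \<Rightarrow> real) \<Rightarrow> nat \<Rightarrow> (nat \<times> nat \<Rightarrow> real) \<Rightarrow> 'a set" where
  "state_event M E0 \<theta> k s = {\<omega> \<in> space M. edge_state E0 \<theta> k \<omega> = s}"

text \<open>Since sigma_k takes finitely many values, E[X | sigma_k] on {sigma_k = s}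
  (with P(sigma_k = s) > 0) equals this quantity with A = {sigma_k = s}.\<close>
definition cexp :: "'a measure \<Rightarrow> ('a \<Rightarrow> real) \<Rightarrow> 'a set \<Rightarrow> real" where
  "cexp M X A = (\<integral>\<omega>. indicator A \<omega> * X \<omega> \<partial>M) / measure M A"

definition cond_var_edge :: "'a measure \<Rightarrow> (nat \<times> nat) set \<Rightarrow> (nat \<times> nat \<Rightarrow> nat \<Rightarrow> 'a \<Rightarrow> real) \<Rightarrow> nat \<Rightarrow> (nat \<times> nat \<Rightarrow> real) \<Rightarrow> nat \<times> nat \<Rightarrow> real" where
  "cond_var_edge M E0 \<theta> k s e =
     (let \<alpha> = cexp M (\<theta> e (Suc k)) (state_event M E0 \<theta> k s) in \<alpha> * (1 - \<alpha>))"

definition var_mat :: "nat \<Rightarrow> (nat \<times> nat) set \<Rightarrow> (nat \<times> nat \<Rightarrow> real) \<Rightarrow> nat \<Rightarrow> nat \<Rightarrow> real" where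
  "var_mat N E0 v i j =
     (if i = j then (\<Sum>r\<in>{r \<in> {1..N}. (i, r) \<in> E0}. v (i, r))
      else if (i, j) \<in> E0 then - v (i, j) else 0)"

definition var_mat_transp :: "nat \<Rightarrow> (nat \<times> nat) set \<Rightarrow> (nat \<times> nat \<Rightarrow> real) \<Rightarrow> nat \<Rightarrow> nat \<Rightarrow> real" where
  "var_mat_transp N E0 v i j =
     (if i = j then (\<Sum>s\<in>{s \<in> {1..N}. (s, i) \<in> E0}. v (s, i))
      else if (j, i) \<in> E0 then - v (j, i) else 0)"

end

theory Submission
  imports Defs
begin

(* Write the Laplacian of the random graph as L = sum_e theta^e L_e, where L_e is the Laplacian of
   the one-edge graph e. Then (L^T L)_ab = sum_(e,f) theta^e theta^f (L_e^T L_f)_ab. Conditionally on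
   {sigma_k = s}, theta^e and theta^f are uncorrelated whenever e and f join different vertex pairs,
   because the event and both variables factor through independent pair blocks. Of the remaining
   terms, those with e <> f vanish (the two orientations of a pair have different tails, so
   L_e^T L_f = 0), and those with e = f leave v^e L_e^T L_e since theta^2 = theta. Finally
   sum_e v^e L_e^T L_e = V_k(G) + V_k(G^T). *)

lemma loop_free_edgeD:
  assumes "E \<subseteq> {1..N} \<times> {1..N}" "\<forall>i. (i, i) \<notin> E" "e \<in> E"
  shows "fst e \<noteq> snd e" "fst e \<in> {1..N}" "snd e \<in> {1..N}"
  using assms by (cases e; auto)+

lemma laplacian_singleton:
  assumes "fst e \<noteq> snd e" "snd e \<in> {1..N}"
  shows "laplacian N {e} i j = (if i = j \<and> i = fst e then 1 else 0) - (if (i, j) = e then 1 else 0)"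
proof (cases "i = j")
  case True
  have "{l \<in> {1..N}. l \<noteq> i \<and> (i, l) \<in> {e}} = (if i = fst e then {snd e} else {})"
    using assms by (cases e) auto
  then show ?thesis
    using True assms(1) by (cases e) (simp add: laplacian_def)
qed (auto simp: laplacian_def)

lemma laplacian_singleton_row:
  assumes "fst e \<noteq> snd e" "snd e \<in> {1..N}"
  shows "laplacian N {e} l a = (if l = fst e then (if a = fst e then 1 else 0) - (if a = snd e then 1 else 0) else 0)"
  using assms by (cases e) (auto simp: laplacian_singleton)

lemma laplacian_eq_sum_singletons:
  assumes E: "E \<subseteq> {1..N} \<times> {1..N}" and loop_free: "\<forall>i. (i, i) \<notin> E"
  shows "laplacian N E i j = (\<Sum>e\<in>E. laplacian N {e} i j)"
proof -
  have fin: "finite E" using E finite_subset by blast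
  note edge = loop_free_edgeD[OF E loop_free]
  show ?thesis
  proof (cases "i = j")
    case True
    have "(\<Sum>e\<in>E. laplacian N {e} i j) = (\<Sum>e\<in>E. if fst e = i then 1 else 0)"
      using True edge loop_free by (intro sum.cong) (auto simp: laplacian_singleton)
    also have "\<dots> = real (card {e \<in> E. fst e = i})"
      using fin by (simp add: sum.If_cases Int_def conj_commute)
    also have "card {e \<in> E. fst e = i} = card {l \<in> {1..N}. l \<noteq> i \<and> (i, l) \<in> E}"
      by (rule bij_betw_same_card[of snd]) (use E loop_free in \<open>auto simp: bij_betw_def inj_on_def image_iff\<close>)
    finally show ?thesis using True by (simp add: laplacian_def)
  next
    case False
    have "(\<Sum>e\<in>E. laplacian N {e} i j) = (\<Sum>e\<in>E. if e = (i, j) then -1 else 0)"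
      using False edge by (intro sum.cong) (auto simp: laplacian_singleton)
    then show ?thesis using False fin by (simp add: laplacian_def)
  qed
qed

lemma laplacian_binary_edges:
  assumes E: "E \<subseteq> {1..N} \<times> {1..N}" and loop_free: "\<forall>i. (i, i) \<notin> E"
    and binary: "\<And>e. e \<in> E \<Longrightarrow> t e \<in> {0, 1}"
  shows "laplacian N {e \<in> E. t e = 1} i j = (\<Sum>e\<in>E. t e * laplacian N {e} i j)"
proof -
  have "laplacian N {e \<in> E. t e = 1} i j = (\<Sum>e\<in>{e \<in> E. t e = 1}. laplacian N {e} i j)"
    using E loop_free by (intro laplacian_eq_sum_singletons) auto
  also have "\<dots> = (\<Sum>e\<in>E. if t e = 1 then laplacian N {e} i j else 0)"
    using E finite_subset by (intro sum.inter_filter) blast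
  also have "\<dots> = (\<Sum>e\<in>E. t e * laplacian N {e} i j)"
    using binary by (intro sum.cong) force+
  finally show ?thesis .
qed

lemma mmult_mtrans_sum_sum:
  "mmult N (mtrans (\<lambda>i j. \<Sum>e\<in>E. x e * W e i j)) (\<lambda>i j. \<Sum>f\<in>F. y f * V f i j) a b
     = (\<Sum>e\<in>E. \<Sum>f\<in>F. x e * y f * mmult N (mtrans (W e)) (V f) a b)"
proof -
  have "mmult N (mtrans (\<lambda>i j. \<Sum>e\<in>E. x e * W e i j)) (\<lambda>i j. \<Sum>f\<in>F. y f * V f i j) a b
      = (\<Sum>l\<in>{1..N}. \<Sum>e\<in>E. \<Sum>f\<in>F. x e * y f * (W e l a * V f l b))"
    by (simp add: mmult_def mtrans_def sum_product algebra_simps)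
  also have "\<dots> = (\<Sum>e\<in>E. \<Sum>l\<in>{1..N}. \<Sum>f\<in>F. x e * y f * (W e l a * V f l b))"
    by (rule sum.swap)
  also have "\<dots> = (\<Sum>e\<in>E. \<Sum>f\<in>F. \<Sum>l\<in>{1..N}. x e * y f * (W e l a * V f l b))"
    by (intro sum.cong refl sum.swap)
  finally show ?thesis
    by (simp add: mmult_def mtrans_def sum_distrib_left)
qed

lemma mmult_mtrans_laplacian_singletons:
  assumes "fst e \<noteq> snd e" "snd e \<in> {1..N}" "fst f \<noteq> snd f" "snd f \<in> {1..N}"
  shows "mmult N (mtrans (laplacian N {e})) (laplacian N {f}) a b
    = (if fst e = fst f \<and> fst e \<in> {1..N}
       then ((if a = fst e then 1 else 0) - (if a = snd e then 1 else 0))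
          * ((if b = fst f then 1 else 0) - (if b = snd f then 1 else 0))
       else 0)"
  using assms by (simp add: mmult_def mtrans_def laplacian_singleton_row if_distrib cong: if_cong)

lemma var_mat_add_var_mat_transp:
  assumes E: "E \<subseteq> {1..N} \<times> {1..N}" and loop_free: "\<forall>i. (i, i) \<notin> E"
  shows "var_mat N E v a b + var_mat_transp N E v a b
    = (\<Sum>e\<in>E. v e * mmult N (mtrans (laplacian N {e})) (laplacian N {e}) a b)"
proof -
  have fin: "finite E" using E finite_subset by blast
  note edge = loop_free_edgeD[OF E loop_free]
  have out_edges: "(\<Sum>r\<in>{r \<in> {1..N}. (a, r) \<in> E}. v (a, r)) = (\<Sum>e\<in>{e \<in> E. fst e = a}. v e)"
    using E by (intro sum.reindex_bij_betw) (auto simp: bij_betw_def inj_on_def image_iff)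
  have in_edges: "(\<Sum>r\<in>{r \<in> {1..N}. (r, a) \<in> E}. v (r, a)) = (\<Sum>e\<in>{e \<in> E. snd e = a}. v e)"
    using E by (intro sum.reindex_bij_betw) (auto simp: bij_betw_def inj_on_def image_iff)
  show ?thesis
  proof (cases "a = b")
    case True
    have "(\<Sum>e\<in>E. v e * mmult N (mtrans (laplacian N {e})) (laplacian N {e}) a b)
        = (\<Sum>e\<in>E. (if fst e = a then v e else 0) + (if snd e = a then v e else 0))"
      using True edge loop_free by (intro sum.cong) (auto simp: mmult_mtrans_laplacian_singletons)
    also have "\<dots> = (\<Sum>e\<in>{e \<in> E. fst e = a}. v e) + (\<Sum>e\<in>{e \<in> E. snd e = a}. v e)"
      using fin by (simp add: sum.distrib sum.inter_filter)
    finally show ?thesis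
      using True out_edges in_edges by (simp add: var_mat_def var_mat_transp_def)
  next
    case False
    have "(\<Sum>e\<in>E. v e * mmult N (mtrans (laplacian N {e})) (laplacian N {e}) a b)
        = (\<Sum>e\<in>E. (if e = (a, b) then - v e else 0) + (if e = (b, a) then - v e else 0))"
      using False edge by (intro sum.cong) (auto simp: mmult_mtrans_laplacian_singletons prod_eq_iff)
    then show ?thesis
      using False fin by (simp add: sum.distrib var_mat_def var_mat_transp_def)
  qed
qed

lemma sum_sum_split_diagonal:
  fixes m1 :: "'e \<Rightarrow> real" and m2 G :: "'e \<Rightarrow> 'e \<Rightarrow> real"
  assumes "finite E"
    and diag: "\<And>e. e \<in> E \<Longrightarrow> m2 e e = m1 e"
    and off_block: "\<And>e f. e \<in> E \<Longrightarrow> f \<in> E \<Longrightarrow> \<pi> e \<noteq> \<pi> f \<Longrightarrow> m2 e f = m1 e * m1 f"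
    and in_block: "\<And>e f. e \<in> E \<Longrightarrow> f \<in> E \<Longrightarrow> e \<noteq> f \<Longrightarrow> \<pi> e = \<pi> f \<Longrightarrow> G e f = 0"
  shows "(\<Sum>e\<in>E. \<Sum>f\<in>E. m2 e f * G e f)
    = (\<Sum>e\<in>E. \<Sum>f\<in>E. m1 e * m1 f * G e f) + (\<Sum>e\<in>E. m1 e * (1 - m1 e) * G e e)"
proof -
  have row: "(\<Sum>f\<in>E. (m2 e f - m1 e * m1 f) * G e f) = m1 e * (1 - m1 e) * G e e"
    if "e \<in> E" for e
  proof -
    have "(\<Sum>f\<in>E. (m2 e f - m1 e * m1 f) * G e f) = (\<Sum>f\<in>E. if f = e then m1 e * (1 - m1 e) * G e e else 0)"
    proof (intro sum.cong refl)
      fix f assume "f \<in> E"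
      then show "(m2 e f - m1 e * m1 f) * G e f = (if f = e then m1 e * (1 - m1 e) * G e e else 0)"
        using that diag[of e] off_block[of e f] in_block[of e f]
        by (cases "\<pi> e = \<pi> f") (auto simp: algebra_simps)
    qed
    then show ?thesis using that \<open>finite E\<close> by simp
  qed
  have "(\<Sum>e\<in>E. \<Sum>f\<in>E. m2 e f * G e f) - (\<Sum>e\<in>E. \<Sum>f\<in>E. m1 e * m1 f * G e f)
      = (\<Sum>e\<in>E. \<Sum>f\<in>E. (m2 e f - m1 e * m1 f) * G e f)"
    by (simp add: sum_subtractf left_diff_distrib)
  also have "\<dots> = (\<Sum>e\<in>E. m1 e * (1 - m1 e) * G e e)"
    using row by simp
  finally show ?thesis by simp
qed

lemma mmult_mtrans_laplacian_same_pair: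
  assumes "fst e \<noteq> snd e" "snd e \<in> {1..N}" "fst f \<noteq> snd f" "snd f \<in> {1..N}"
    and "e \<noteq> f" "{fst e, snd e} = {fst f, snd f}"
  shows "mmult N (mtrans (laplacian N {e})) (laplacian N {f}) a b = 0"
proof -
  have "fst e \<noteq> fst f"
    using assms by (auto simp: doubleton_eq_iff prod_eq_iff)
  then show ?thesis
    using assms(1-4) by (simp add: mmult_mtrans_laplacian_singletons)
qed

lemma sum_mmult_mtrans_laplacian_singletons_split:
  fixes m1 :: "nat \<times> nat \<Rightarrow> real" and m2 :: "nat \<times> nat \<Rightarrow> nat \<times> nat \<Rightarrow> real"
  assumes E: "E \<subseteq> {1..N} \<times> {1..N}" and loop_free: "\<forall>i. (i, i) \<notin> E"
    and diag: "\<And>e. e \<in> E \<Longrightarrow> m2 e e = m1 e"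
    and distinct_pairs: "\<And>e f. e \<in> E \<Longrightarrow> f \<in> E \<Longrightarrow> {fst e, snd e} \<noteq> {fst f, snd f} \<Longrightarrow> m2 e f = m1 e * m1 f"
  shows "(\<Sum>e\<in>E. \<Sum>f\<in>E. m2 e f * mmult N (mtrans (laplacian N {e})) (laplacian N {f}) a b)
    = (\<Sum>e\<in>E. \<Sum>f\<in>E. m1 e * m1 f * mmult N (mtrans (laplacian N {e})) (laplacian N {f}) a b)
      + var_mat N E (\<lambda>e. m1 e * (1 - m1 e)) a b + var_mat_transp N E (\<lambda>e. m1 e * (1 - m1 e)) a b"
proof -
  note edge = loop_free_edgeD[OF E loop_free]
  have "finite E" using E finite_subset by blast
  then show ?thesis
    using edge diag distinct_pairs
    by (subst sum_sum_split_diagonal[where \<pi> = "\<lambda>e. {fst e, snd e}"])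
      (auto simp: var_mat_add_var_mat_transp[OF E loop_free] mmult_mtrans_laplacian_same_pair)
qed

lemma cexp_cong:
  assumes "\<And>\<omega>. \<omega> \<in> space M \<Longrightarrow> X \<omega> = Y \<omega>"
  shows "cexp M X A = cexp M Y A"
  unfolding cexp_def using assms by (simp cong: Bochner_Integration.integral_cong)

lemma cexp_sum:
  assumes "finite I" "\<And>i. i \<in> I \<Longrightarrow> integrable M (\<lambda>\<omega>. indicator A \<omega> * g i \<omega>)"
  shows "cexp M (\<lambda>\<omega>. \<Sum>i\<in>I. g i \<omega> * c i) A = (\<Sum>i\<in>I. cexp M (g i) A * c i)"
proof -
  have "(\<integral>\<omega>. indicator A \<omega> * (\<Sum>i\<in>I. g i \<omega> * c i) \<partial>M)
      = (\<integral>\<omega>. (\<Sum>i\<in>I. (indicator A \<omega> * g i \<omega>) * c i) \<partial>M)"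
    by (simp add: sum_distrib_left algebra_simps)
  also have "\<dots> = (\<Sum>i\<in>I. (\<integral>\<omega>. indicator A \<omega> * g i \<omega> \<partial>M) * c i)"
    using assms by simp
  finally show ?thesis unfolding cexp_def by (simp add: sum_divide_distrib)
qed

lemma (in finite_measure) integrable_indicator_mult_bounded:
  fixes g :: "'a \<Rightarrow> real"
  assumes "A \<in> sets M" "g \<in> borel_measurable M" "\<And>\<omega>. \<omega> \<in> space M \<Longrightarrow> \<bar>g \<omega>\<bar> \<le> c"
  shows "integrable M (\<lambda>\<omega>. indicator A \<omega> * g \<omega>)"
  using assms by (intro integrable_const_bound[where B="max c 0"] AE_I2)
    (auto simp: indicator_def le_max_iff_disj)

lemma (in finite_measure) cexp_laplacian_binary_edges:
  fixes T :: "nat \<times> nat \<Rightarrow> 'a \<Rightarrow> real"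
  assumes E: "E \<subseteq> {1..N} \<times> {1..N}" and loop_free: "\<forall>i. (i, i) \<notin> E" and A: "A \<in> sets M"
    and T: "\<And>e. T e \<in> borel_measurable M" "\<And>e \<omega>. \<omega> \<in> space M \<Longrightarrow> T e \<omega> \<in> {0, 1}"
  shows "cexp M (\<lambda>\<omega>. laplacian N {e \<in> E. T e \<omega> = 1} i j) A = (\<Sum>e\<in>E. cexp M (T e) A * laplacian N {e} i j)"
proof -
  have "cexp M (\<lambda>\<omega>. laplacian N {e \<in> E. T e \<omega> = 1} i j) A = cexp M (\<lambda>\<omega>. \<Sum>e\<in>E. T e \<omega> * laplacian N {e} i j) A"
  proof (rule cexp_cong)
    fix \<omega> assume "\<omega> \<in> space M"
    then show "laplacian N {e \<in> E. T e \<omega> = 1} i j = (\<Sum>e\<in>E. T e \<omega> * laplacian N {e} i j)"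
      by (rule laplacian_binary_edges[OF E loop_free T(2)])
  qed
  also have "\<dots> = (\<Sum>e\<in>E. cexp M (T e) A * laplacian N {e} i j)"
  proof (rule cexp_sum)
    show "finite E" using E finite_subset by blast
    fix e
    show "integrable M (\<lambda>\<omega>. indicator A \<omega> * T e \<omega>)"
    proof (rule integrable_indicator_mult_bounded[OF A T(1)])
      fix \<omega> assume "\<omega> \<in> space M"
      then show "\<bar>T e \<omega>\<bar> \<le> 1" using T(2)[of \<omega> e] by auto
    qed
  qed
  finally show ?thesis .
qed

lemma (in finite_measure) cexp_mmult_mtrans_laplacian_binary_edges:
  fixes T :: "nat \<times> nat \<Rightarrow> 'a \<Rightarrow> real"
  assumes E: "E \<subseteq> {1..N} \<times> {1..N}" and loop_free: "\<forall>i. (i, i) \<notin> E" and A: "A \<in> sets M"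
    and T: "\<And>e. T e \<in> borel_measurable M" "\<And>e \<omega>. \<omega> \<in> space M \<Longrightarrow> T e \<omega> \<in> {0, 1}"
  shows "cexp M (\<lambda>\<omega>. mmult N (mtrans (laplacian N {e \<in> E. T e \<omega> = 1})) (laplacian N {e \<in> E. T e \<omega> = 1}) a b) A
    = (\<Sum>e\<in>E. \<Sum>f\<in>E. cexp M (\<lambda>\<omega>. T e \<omega> * T f \<omega>) A * mmult N (mtrans (laplacian N {e})) (laplacian N {f}) a b)"
proof -
  define G where "G x = mmult N (mtrans (laplacian N {fst x})) (laplacian N {snd x}) a b" for x
  have "cexp M (\<lambda>\<omega>. mmult N (mtrans (laplacian N {e \<in> E. T e \<omega> = 1})) (laplacian N {e \<in> E. T e \<omega> = 1}) a b) A
      = cexp M (\<lambda>\<omega>. \<Sum>x\<in>E \<times> E. T (fst x) \<omega> * T (snd x) \<omega> * G x) A"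
  proof (rule cexp_cong)
    fix \<omega> assume "\<omega> \<in> space M"
    then have "laplacian N {e \<in> E. T e \<omega> = 1} = (\<lambda>i j. \<Sum>e\<in>E. T e \<omega> * laplacian N {e} i j)"
      by (intro ext laplacian_binary_edges[OF E loop_free T(2)])
    then show "mmult N (mtrans (laplacian N {e \<in> E. T e \<omega> = 1})) (laplacian N {e \<in> E. T e \<omega> = 1}) a b
        = (\<Sum>x\<in>E \<times> E. T (fst x) \<omega> * T (snd x) \<omega> * G x)"
      by (simp add: mmult_mtrans_sum_sum sum.cartesian_product G_def split_def)
  qed
  also have "\<dots> = (\<Sum>x\<in>E \<times> E. cexp M (\<lambda>\<omega>. T (fst x) \<omega> * T (snd x) \<omega>) A * G x)"
  proof (rule cexp_sum)
    show "finite (E \<times> E)" using E finite_subset by blast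
    fix x
    show "integrable M (\<lambda>\<omega>. indicator A \<omega> * (T (fst x) \<omega> * T (snd x) \<omega>))"
    proof (rule integrable_indicator_mult_bounded[OF A])
      show "(\<lambda>\<omega>. T (fst x) \<omega> * T (snd x) \<omega>) \<in> borel_measurable M"
        using T(1) by measurable
      fix \<omega> assume "\<omega> \<in> space M"
      then show "\<bar>T (fst x) \<omega> * T (snd x) \<omega>\<bar> \<le> 1"
        using T(2)[of \<omega> "fst x"] T(2)[of \<omega> "snd x"] by auto
    qed
  qed
  finally show ?thesis
    by (simp add: sum.cartesian_product G_def split_def)
qed

lemma (in prob_space) integral_indep_var_mult:
  fixes G H :: "_ \<Rightarrow> real"
  assumes "indep_var N1 Y N2 Z" "G \<in> borel_measurable N1" "H \<in> borel_measurable N2"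
    and "integrable M (\<lambda>\<omega>. G (Y \<omega>))" "integrable M (\<lambda>\<omega>. H (Z \<omega>))"
  shows "(\<integral>\<omega>. G (Y \<omega>) * H (Z \<omega>) \<partial>M) = (\<integral>\<omega>. G (Y \<omega>) \<partial>M) * (\<integral>\<omega>. H (Z \<omega>) \<partial>M)"
proof -
  have "indep_var borel (\<lambda>\<omega>. G (Y \<omega>)) borel (\<lambda>\<omega>. H (Z \<omega>))"
    using indep_var_compose[OF assms(1-3)] by (simp add: comp_def)
  then show ?thesis using assms(4,5) by (rule indep_var_lebesgue_integral)
qed

(* No positivity of P(A) is needed: if it vanishes, both sides are 0 because x / 0 = 0. *)
lemma (in prob_space) cexp_mult_indep_var:
  fixes \<phi> \<psi> :: "_ \<Rightarrow> real"
  assumes indep: "indep_var N1 Y N2 Z" and B: "B \<in> sets N1" and C: "C \<in> sets N2"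
    and \<phi>: "\<phi> \<in> borel_measurable N1" "\<And>\<omega>. \<omega> \<in> space M \<Longrightarrow> \<bar>\<phi> (Y \<omega>)\<bar> \<le> c"
    and \<psi>: "\<psi> \<in> borel_measurable N2" "\<And>\<omega>. \<omega> \<in> space M \<Longrightarrow> \<bar>\<psi> (Z \<omega>)\<bar> \<le> d"
    and A: "A = {\<omega> \<in> space M. Y \<omega> \<in> B \<and> Z \<omega> \<in> C}"
  shows "cexp M (\<lambda>\<omega>. \<phi> (Y \<omega>) * \<psi> (Z \<omega>)) A = cexp M (\<lambda>\<omega>. \<phi> (Y \<omega>)) A * cexp M (\<lambda>\<omega>. \<psi> (Z \<omega>)) A"
proof -
  have Y: "Y \<in> measurable M N1" and Z: "Z \<in> measurable M N2"
    using indep by (rule indep_var_rv1, rule indep_var_rv2)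
  define \<Phi> where "\<Phi> y = indicator B y * \<phi> y" for y
  define \<Psi> where "\<Psi> z = indicator C z * \<psi> z" for z
  have mB: "\<Phi> \<in> borel_measurable N1" "(indicator B :: _ \<Rightarrow> real) \<in> borel_measurable N1"
    and mC: "\<Psi> \<in> borel_measurable N2" "(indicator C :: _ \<Rightarrow> real) \<in> borel_measurable N2"
    using B C \<phi> \<psi> unfolding \<Phi>_def \<Psi>_def by measurable
  have int: "integrable M (\<lambda>\<omega>. \<Phi> (Y \<omega>))" "integrable M (\<lambda>\<omega>. \<Psi> (Z \<omega>))"
    "integrable M (\<lambda>\<omega>. indicator B (Y \<omega>) :: real)" "integrable M (\<lambda>\<omega>. indicator C (Z \<omega>) :: real)"
  proof -
    show "integrable M (\<lambda>\<omega>. \<Phi> (Y \<omega>))"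
      by (intro integrable_const_bound[where B="max c 0"] AE_I2)
        (use measurable_compose[OF Y mB(1)] \<phi>(2) in \<open>auto simp: \<Phi>_def indicator_def le_max_iff_disj\<close>)
    show "integrable M (\<lambda>\<omega>. \<Psi> (Z \<omega>))"
      by (intro integrable_const_bound[where B="max d 0"] AE_I2)
        (use measurable_compose[OF Z mC(1)] \<psi>(2) in \<open>auto simp: \<Psi>_def indicator_def le_max_iff_disj\<close>)
    show "integrable M (\<lambda>\<omega>. indicator B (Y \<omega>) :: real)"
      by (rule integrable_const_bound[where B=1]) (use measurable_compose[OF Y mB(2)] in auto)
    show "integrable M (\<lambda>\<omega>. indicator C (Z \<omega>) :: real)"
      by (rule integrable_const_bound[where B=1]) (use measurable_compose[OF Z mC(2)] in auto)
  qed
  note product = integral_indep_var_mult[OF indep]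
  have indicator_A: "indicator A \<omega> = indicator B (Y \<omega>) * (indicator C (Z \<omega>) :: real)"
    if "\<omega> \<in> space M" for \<omega>
    using that by (simp add: A indicator_def)
  have "(\<integral>\<omega>. indicator A \<omega> * (\<phi> (Y \<omega>) * \<psi> (Z \<omega>)) \<partial>M) = (\<integral>\<omega>. \<Phi> (Y \<omega>) * \<Psi> (Z \<omega>) \<partial>M)"
    by (intro Bochner_Integration.integral_cong) (simp_all add: indicator_A \<Phi>_def \<Psi>_def)
  moreover have "(\<integral>\<omega>. indicator A \<omega> * \<phi> (Y \<omega>) \<partial>M) = (\<integral>\<omega>. \<Phi> (Y \<omega>) * indicator C (Z \<omega>) \<partial>M)"
    by (intro Bochner_Integration.integral_cong) (simp_all add: indicator_A \<Phi>_def)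
  moreover have "(\<integral>\<omega>. indicator A \<omega> * \<psi> (Z \<omega>) \<partial>M) = (\<integral>\<omega>. indicator B (Y \<omega>) * \<Psi> (Z \<omega>) \<partial>M)"
    by (intro Bochner_Integration.integral_cong) (simp_all add: indicator_A \<Psi>_def)
  moreover have "measure M A = (\<integral>\<omega>. indicator B (Y \<omega>) * indicator C (Z \<omega>) \<partial>M)"
  proof -
    have "measure M A = (\<integral>\<omega>. indicator A \<omega> \<partial>M)"
      by (simp add: A Int_absorb2)
    also have "\<dots> = (\<integral>\<omega>. indicator B (Y \<omega>) * indicator C (Z \<omega>) \<partial>M)"
      by (intro Bochner_Integration.integral_cong) (simp_all add: indicator_A)
    finally show ?thesis .
  qed
  ultimately show ?thesis
    unfolding cexp_def using product[OF mB(1) mC(1) int(1,2)] product[OF mB(1) mC(2) int(1,4)]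
      product[OF mB(2) mC(1) int(3,2)] product[OF mB(2) mC(2) int(3,4)]
    by simp
qed

lemma state_event_eq:
  "state_event M E0 \<theta> k s = {\<omega> \<in> space M. (\<forall>e\<in>E0. \<theta> e k \<omega> = s e) \<and> (\<forall>e. e \<notin> E0 \<longrightarrow> s e = 0)}"
  unfolding state_event_def edge_state_def by (auto simp: fun_eq_iff)

lemma state_event_sets:
  assumes "finite E0" "\<And>e. \<theta> e k \<in> borel_measurable M"
  shows "state_event M E0 \<theta> k s \<in> sets M"
  unfolding state_event_eq using assms by measurable

lemma measurable_component_component[measurable]:
  assumes "v \<in> I"
  shows "(\<lambda>z. z v x) \<in> borel_measurable (PiM I (\<lambda>_. PiM UNIV (\<lambda>_. borel :: real measure)))"
  using measurable_compose[OF measurable_component_singleton[OF assms] measurable_component_singleton[of x UNIV]]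
  by simp

(* The processes on both orientations of the vertex pair u, bundled into one random variable;
   the independence hypothesis of lemma1 says that these bundles are independent. *)
definition pair_blocks :: "(nat \<times> nat) set \<Rightarrow> (nat \<times> nat \<Rightarrow> nat \<Rightarrow> 'a \<Rightarrow> real) \<Rightarrow> nat set \<Rightarrow> 'a \<Rightarrow> (nat \<times> nat) \<times> nat \<Rightarrow> real"
  where "pair_blocks E0 \<theta> u \<omega> = (\<lambda>((i, j), n). if (i, j) \<in> E0 \<and> {i, j} = u then \<theta> (i, j) n \<omega> else 0)"

lemma pair_blocks_edge:
  "x \<in> E0 \<Longrightarrow> pair_blocks E0 \<theta> {fst x, snd x} \<omega> (x, n) = \<theta> x n \<omega>"
  by (cases x) (simp add: pair_blocks_def)

lemma cexp_mult_edges_distinct_pairs: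
  fixes M :: "'a measure" and \<theta> :: "nat \<times> nat \<Rightarrow> nat \<Rightarrow> 'a \<Rightarrow> real"
  assumes "prob_space M" and "finite E0"
    and binary: "\<forall>e n \<omega>. \<omega> \<in> space M \<longrightarrow> \<theta> e n \<omega> \<in> {0, 1}"
    and indep: "prob_space.indep_vars M (\<lambda>_. PiM UNIV (\<lambda>_. borel)) (pair_blocks E0 \<theta>)
        {u. \<exists>(i, j)\<in>E0. u = {i, j}}"
    and e: "e \<in> E0" and f: "f \<in> E0" and distinct_pairs: "{fst e, snd e} \<noteq> {fst f, snd f}"
  shows "cexp M (\<lambda>\<omega>. \<theta> e m \<omega> * \<theta> f m \<omega>) (state_event M E0 \<theta> k s)
        = cexp M (\<theta> e m) (state_event M E0 \<theta> k s) * cexp M (\<theta> f m) (state_event M E0 \<theta> k s)"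
proof -
  interpret prob_space M by fact
  define pair :: "nat \<times> nat \<Rightarrow> nat set" where "pair x = {fst x, snd x}" for x
  define F :: "nat set \<Rightarrow> ((nat \<times> nat) \<times> nat \<Rightarrow> real) measure" where "F = (\<lambda>_. PiM UNIV (\<lambda>_. borel))"
  define R where "R = {u. \<exists>(i, j)\<in>E0. u = {i, j}} - {pair e}"
  define Y where "Y \<omega> = restrict (\<lambda>v. pair_blocks E0 \<theta> v \<omega>) {pair e}" for \<omega>
  define Z where "Z \<omega> = restrict (\<lambda>v. pair_blocks E0 \<theta> v \<omega>) R" for \<omega>
  have pair_R: "pair x \<in> R" if "x \<in> E0" "pair x \<noteq> pair e" for x
    using that by (force simp: R_def pair_def)
  have Y_edge: "Y \<omega> (pair e) (x, n) = \<theta> x n \<omega>" if "x \<in> E0" "pair x = pair e" for x n \<omega>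
    using that pair_blocks_edge[of x] by (simp add: Y_def pair_def)
  have Z_edge: "Z \<omega> (pair x) (x, n) = \<theta> x n \<omega>" if "x \<in> E0" "pair x \<noteq> pair e" for x n \<omega>
    using that pair_R pair_blocks_edge[of x] by (simp add: Z_def pair_def)
  have indep_YZ: "indep_var (PiM {pair e} F) Y (PiM R F) Z"
    unfolding Y_def Z_def F_def
    using e by (intro indep_var_restrict[OF indep]) (auto simp: R_def pair_def)
  then have "Y \<in> measurable M (PiM {pair e} F)" "Z \<in> measurable M (PiM R F)"
    by (rule indep_var_rv1, rule indep_var_rv2)
  then have YZ_space: "Y \<omega> \<in> space (PiM {pair e} F)" "Z \<omega> \<in> space (PiM R F)" if "\<omega> \<in> space M" for \<omega>
    using that by (auto intro: measurable_space)
  \<comment> \<open>The condition on s outside E0 does not depend on the sample; it is put into the first block.\<close>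
  define B where "B = {y \<in> space (PiM {pair e} F).
    (\<forall>x\<in>{x \<in> E0. pair x = pair e}. y (pair e) (x, k) = s x) \<and> (\<forall>x. x \<notin> E0 \<longrightarrow> s x = 0)}"
  define C where "C = {z \<in> space (PiM R F). \<forall>x\<in>{x \<in> E0. pair x \<noteq> pair e}. z (pair x) (x, k) = s x}"
  have B: "B \<in> sets (PiM {pair e} F)"
    unfolding B_def F_def using \<open>finite E0\<close> by measurable
  have C: "C \<in> sets (PiM R F)"
    unfolding C_def F_def using \<open>finite E0\<close> pair_R by measurable
  have split_E0: "(\<forall>x\<in>E0. P x) \<longleftrightarrow> (\<forall>x\<in>{x \<in> E0. pair x = pair e}. P x) \<and> (\<forall>x\<in>{x \<in> E0. pair x \<noteq> pair e}. P x)"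
    for P by blast
  have A: "state_event M E0 \<theta> k s = {\<omega> \<in> space M. Y \<omega> \<in> B \<and> Z \<omega> \<in> C}"
    unfolding state_event_eq split_E0 B_def C_def using YZ_space Y_edge Z_edge by auto
  have bounded: "\<bar>\<theta> x m \<omega>\<bar> \<le> 1" if "\<omega> \<in> space M" for x \<omega>
  proof -
    have "\<theta> x m \<omega> \<in> {0, 1}" using binary that by blast
    then show ?thesis by auto
  qed
  have fe: "pair f \<noteq> pair e" using distinct_pairs by (simp add: pair_def)
  show ?thesis
    unfolding Y_edge[OF e refl, symmetric] Z_edge[OF f fe, symmetric] A
  proof (rule cexp_mult_indep_var[OF indep_YZ B C, where c=1 and d=1])
    show "(\<lambda>y. y (pair e) (e, m)) \<in> borel_measurable (PiM {pair e} F)"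
      unfolding F_def by measurable
    show "(\<lambda>z. z (pair f) (f, m)) \<in> borel_measurable (PiM R F)"
      unfolding F_def using pair_R[OF f fe] by measurable
  qed (use bounded Y_edge[OF e refl] Z_edge[OF f fe] in auto)
qed

theorem lemma1:
  fixes M :: "'a measure" and N :: nat and E0 :: "(nat \<times> nat) set"
    and \<theta> :: "nat \<times> nat \<Rightarrow> nat \<Rightarrow> 'a \<Rightarrow> real"
    and p q \<eta> :: "nat \<times> nat \<Rightarrow> real"
    and k :: nat and s :: "nat \<times> nat \<Rightarrow> real"
  assumes prob: "prob_space M"
    and E0_sub: "E0 \<subseteq> {1..N} \<times> {1..N}"
    and no_loops: "\<forall>i. (i, i) \<notin> E0"
    and meas: "\<forall>e n. \<theta> e n \<in> borel_measurable M"
    and binary: "\<forall>e n \<omega>. \<omega> \<in> space M \<longrightarrow> \<theta> e n \<omega> \<in> {0, 1}"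
    and params: "\<forall>e\<in>E0. p e \<in> {0..1} \<and> q e \<in> {0..1} \<and> \<eta> e \<in> {0..1}"
    and init: "\<forall>e\<in>E0. measure M {\<omega> \<in> space M. \<theta> e 0 \<omega> = 1} = \<eta> e"
    and markov: "\<forall>n (ss :: nat \<Rightarrow> nat \<times> nat \<Rightarrow> real) s'.
        measure M {\<omega> \<in> space M. (\<forall>j\<le>n. edge_state E0 \<theta> j \<omega> = ss j) \<and> edge_state E0 \<theta> (Suc n) \<omega> = s'}
          * measure M {\<omega> \<in> space M. edge_state E0 \<theta> n \<omega> = ss n}
        = measure M {\<omega> \<in> space M. \<forall>j\<le>n. edge_state E0 \<theta> j \<omega> = ss j}
          * measure M {\<omega> \<in> space M. edge_state E0 \<theta> n \<omega> = ss n \<and> edge_state E0 \<theta> (Suc n) \<omega> = s'}"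
    and trans: "\<forall>n s' e. e \<in> E0 \<longrightarrow>
        measure M {\<omega> \<in> space M. edge_state E0 \<theta> n \<omega> = s' \<and> \<theta> e (Suc n) \<omega> = 1}
        = (if s' e = 1 then p e else q e) * measure M {\<omega> \<in> space M. edge_state E0 \<theta> n \<omega> = s'}"
    and indep: "prob_space.indep_vars M (\<lambda>_. PiM UNIV (\<lambda>_. borel))
        (\<lambda>u \<omega>. \<lambda>((i, j), n). if (i, j) \<in> E0 \<and> {i, j} = u then \<theta> (i, j) n \<omega> else 0)
        {u. \<exists>(i, j)\<in>E0. u = {i, j}}"
    and pos: "measure M (state_event M E0 \<theta> k s) > 0"
  shows "\<forall>a\<in>{1..N}. \<forall>b\<in>{1..N}.
     cexp M (\<lambda>\<omega>. mmult N (mtrans (laplacian N (rand_edges E0 \<theta> (Suc k) \<omega>)))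
                           (laplacian N (rand_edges E0 \<theta> (Suc k) \<omega>)) a b)
            (state_event M E0 \<theta> k s)
     = mmult N (mtrans (\<lambda>i j. cexp M (\<lambda>\<omega>. laplacian N (rand_edges E0 \<theta> (Suc k) \<omega>) i j) (state_event M E0 \<theta> k s)))
               (\<lambda>i j. cexp M (\<lambda>\<omega>. laplacian N (rand_edges E0 \<theta> (Suc k) \<omega>) i j) (state_event M E0 \<theta> k s)) a b
       + var_mat N E0 (cond_var_edge M E0 \<theta> k s) a b
       + var_mat_transp N E0 (cond_var_edge M E0 \<theta> k s) a b"
proof -
  interpret prob_space M by fact
  define A where "A = state_event M E0 \<theta> k s"
  define m1 where "m1 e = cexp M (\<theta> e (Suc k)) A" for e
  have fin: "finite E0" using E0_sub finite_subset by blast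
  have A_sets: "A \<in> sets M"
    unfolding A_def using meas by (intro state_event_sets[OF fin]) blast
  have T: "\<And>e. \<theta> e (Suc k) \<in> borel_measurable M" "\<And>e \<omega>. \<omega> \<in> space M \<Longrightarrow> \<theta> e (Suc k) \<omega> \<in> {0, 1}"
    using meas binary by blast+
  have mean: "cexp M (\<lambda>\<omega>. laplacian N (rand_edges E0 \<theta> (Suc k) \<omega>) i j) A = (\<Sum>e\<in>E0. m1 e * laplacian N {e} i j)"
    for i j unfolding rand_edges_def m1_def by (rule cexp_laplacian_binary_edges[OF E0_sub no_loops A_sets T])
  have second_moment: "cexp M (\<lambda>\<omega>. mmult N (mtrans (laplacian N (rand_edges E0 \<theta> (Suc k) \<omega>)))
      (laplacian N (rand_edges E0 \<theta> (Suc k) \<omega>)) a b) A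
    = (\<Sum>e\<in>E0. \<Sum>f\<in>E0. cexp M (\<lambda>\<omega>. \<theta> e (Suc k) \<omega> * \<theta> f (Suc k) \<omega>) A
        * mmult N (mtrans (laplacian N {e})) (laplacian N {f}) a b)" for a b
    unfolding rand_edges_def by (rule cexp_mmult_mtrans_laplacian_binary_edges[OF E0_sub no_loops A_sets T])
  have diag: "cexp M (\<lambda>\<omega>. \<theta> e (Suc k) \<omega> * \<theta> e (Suc k) \<omega>) A = m1 e" for e
    unfolding m1_def using T(2)[of _ e] by (intro cexp_cong) auto
  have distinct_pairs: "cexp M (\<lambda>\<omega>. \<theta> e (Suc k) \<omega> * \<theta> f (Suc k) \<omega>) A = m1 e * m1 f"
    if "e \<in> E0" "f \<in> E0" "{fst e, snd e} \<noteq> {fst f, snd f}" for e f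
    unfolding A_def m1_def
    by (rule cexp_mult_edges_distinct_pairs[OF prob fin binary indep[folded pair_blocks_def] that])
  show ?thesis
    unfolding cond_var_edge_def Let_def A_def[symmetric] m1_def[symmetric] second_moment mean mmult_mtrans_sum_sum
    by (intro ballI sum_mmult_mtrans_laplacian_singletons_split[OF E0_sub no_loops diag distinct_pairs])
qed

end
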